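(* Let $X\subseteq\mathbb{C}^n$ be a complex analytic set and $\mathcal M\subseteq\mathcal O_X^p$ a sheaf of $\mathcal O_X$-submodules. Then: (1) $\mathcal M_{S_1}$ is an $\mathcal O_X$-submodule of $\mathcal O_X^p$, i.e. for every $x\in X$, $(\mathcal M_{S_1})_x$ is an $\mathcal O_{X,x}$-submodule of $\mathcal O_{X,x}^p$; (2) for every $x\in X$, $\mathcal M_x\subseteq(\mathcal M_{S_1})_x\subseteq\overline{\mathcal M_x}$.
   Context: $X\subseteq\mathbb{C}^n$ is a complex analytic set with coordinates $z_1,\dots,z_n$, and $\pi_1,\pi_2:X\times X\to X$ are the two projections. For $h\in\mathcal O_X^p$ the double of $h$ is $h_D=(h\circ\pi_1,h\circ\pi_2)\in\mathcal O_{X\times X}^{2p}$. The double $\mathcal M_D$ of $\mathcal M\subseteq\mathcal O_X^p$ is the $\mathcal O_{X\times X}$-submodule of $\mathcal O_{X\times X}^{2p}$ generated by $\{h_D: h\in\mathcal M\}$. $\overline N$ denotes the integral closure of a submodule $N$ of a free module over the local ring of an analytic space; by the curve criterion, $h\in\overline N$ at a point iff $\phi^*h\in\phi^*N$ for every analytic curve germ $\phi:(\mathbb C,0)\to$ (space, point). The 1-Lipschitz saturation is $(\mathcal M_{S_1})_x=\{h\in\mathcal O_{X,x}^p: h_D\in\overline{\mathcal M_D}\text{ at }(x,x)\}$. *)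

theory Defs
  imports "HOL-Analysis.Analysis"
begin

definition cholo_on :: "(complex^'m) set \<Rightarrow> (complex^'m \<Rightarrow> complex) \<Rightarrow> bool" where
  "cholo_on U f \<longleftrightarrow> open U \<and>
     (\<forall>w\<in>U. \<exists>D. (f has_derivative D) (at w) \<and> (\<forall>c v. D (c *s v) = c * D v))"

definition sholo_germ :: "complex^'m \<Rightarrow> (complex^'m \<Rightarrow> complex) \<Rightarrow> bool" where
  "sholo_germ y a \<longleftrightarrow> (\<exists>U. open U \<and> y \<in> U \<and> cholo_on U a)"

definition holo_germ :: "complex^'m \<Rightarrow> (complex^'m \<Rightarrow> complex^'q) \<Rightarrow> bool" where
  "holo_germ y h \<longleftrightarrow> (\<exists>U. open U \<and> y \<in> U \<and> (\<forall>j. cholo_on U (\<lambda>z. h z $ j)))"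

definition analytic_set :: "(complex^'m) set \<Rightarrow> bool" where
  "analytic_set X \<longleftrightarrow> (\<forall>x\<in>X. \<exists>U F. open U \<and> x \<in> U \<and> finite F \<and>
       (\<forall>f\<in>F. cholo_on U f) \<and> X \<inter> U = {z\<in>U. \<forall>f\<in>F. f z = 0})"

text \<open>Elements of O_{Y,y}^q are represented by ambient holomorphic maps near y; two
  representatives define the same germ iff they agree on Y near y.\<close>
definition same_germ :: "(complex^'m) set \<Rightarrow> complex^'m \<Rightarrow> (complex^'m \<Rightarrow> 'b) \<Rightarrow> (complex^'m \<Rightarrow> 'b) \<Rightarrow> bool" where
  "same_germ Y y g h \<longleftrightarrow> (\<exists>V. open V \<and> y \<in> V \<and> (\<forall>z\<in>Y \<inter> V. g z = h z))"

definition germ_submodule :: "(complex^'m) set \<Rightarrow> complex^'m \<Rightarrow> (complex^'m \<Rightarrow> complex^'q) set \<Rightarrow> bool" where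
  "germ_submodule Y y N \<longleftrightarrow>
     (\<forall>h\<in>N. holo_germ y h) \<and>
     (\<lambda>z. 0) \<in> N \<and>
     (\<forall>g\<in>N. \<forall>h\<in>N. (\<lambda>z. g z + h z) \<in> N) \<and>
     (\<forall>a h. sholo_germ y a \<longrightarrow> h \<in> N \<longrightarrow> (\<lambda>z. a z *s h z) \<in> N) \<and>
     (\<forall>h\<in>N. \<forall>g. holo_germ y g \<longrightarrow> same_germ Y y g h \<longrightarrow> g \<in> N)"

definition span_germs :: "(complex^'m) set \<Rightarrow> complex^'m \<Rightarrow> (complex^'m \<Rightarrow> complex^'q) set
     \<Rightarrow> (complex^'m \<Rightarrow> complex^'q) set" where
  "span_germs Y y S = {h. holo_germ y h \<and>
     (\<exists>V (k::nat) g a. open V \<and> y \<in> V \<and> (\<forall>i<k. g i \<in> S \<and> sholo_germ y (a i)) \<and>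
        (\<forall>z\<in>Y \<inter> V. h z = (\<Sum>i<k. a i z *s g i z)))}"

definition curve_germ :: "(complex^'m) set \<Rightarrow> complex^'m \<Rightarrow> (complex \<Rightarrow> complex^'m) \<Rightarrow> bool" where
  "curve_germ Y y \<phi> \<longleftrightarrow> \<phi> 0 = y \<and>
     (\<exists>\<epsilon>>0. (\<forall>t\<in>ball 0 \<epsilon>. \<phi> t \<in> Y) \<and> (\<forall>i. (\<lambda>t. \<phi> t $ i) holomorphic_on ball 0 \<epsilon>))"

definition pullback_module :: "(complex \<Rightarrow> complex^'m) \<Rightarrow> (complex^'m \<Rightarrow> complex^'q) set
     \<Rightarrow> (complex \<Rightarrow> complex^'q) set" where
  "pullback_module \<phi> N = {u. \<exists>\<epsilon>>0. \<exists>(k::nat) g a.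
     (\<forall>i<k. g i \<in> N \<and> a i holomorphic_on ball 0 \<epsilon>) \<and>
     (\<forall>t\<in>ball 0 \<epsilon>. u t = (\<Sum>i<k. a i t *s g i (\<phi> t)))}"

text \<open>Integral closure of a submodule N of O_{Y,y}^q (curve criterion):
  h in overline N iff phi^* h in phi^* N for every analytic curve germ phi: (C,0) -> (Y,y).\<close>
definition int_closure :: "(complex^'m) set \<Rightarrow> complex^'m \<Rightarrow> (complex^'m \<Rightarrow> complex^'q) set
     \<Rightarrow> (complex^'m \<Rightarrow> complex^'q) set" where
  "int_closure Y y N = {h. holo_germ y h \<and>
     (\<forall>\<phi>. curve_germ Y y \<phi> \<longrightarrow> (h \<circ> \<phi>) \<in> pullback_module \<phi> N)}"

text \<open>C^n x C^n is identified with C^('n + 'n).\<close>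
definition dpt :: "complex^'n \<Rightarrow> complex^'n \<Rightarrow> complex^('n + 'n)" where
  "dpt x y = (\<chi> k. case k of Inl j \<Rightarrow> x $ j | Inr j \<Rightarrow> y $ j)"

definition pr1 :: "complex^('n + 'n) \<Rightarrow> complex^'n" where
  "pr1 w = (\<chi> j. w $ Inl j)"

definition pr2 :: "complex^('n + 'n) \<Rightarrow> complex^'n" where
  "pr2 w = (\<chi> j. w $ Inr j)"

definition XxX :: "(complex^'n) set \<Rightarrow> (complex^('n + 'n)) set" where
  "XxX X = {w. pr1 w \<in> X \<and> pr2 w \<in> X}"

definition dbl :: "(complex^'n \<Rightarrow> complex^'p) \<Rightarrow> complex^('n + 'n) \<Rightarrow> complex^('p + 'p)" where
  "dbl h w = (\<chi> k. case k of Inl j \<Rightarrow> h (pr1 w) $ j | Inr j \<Rightarrow> h (pr2 w) $ j)"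

definition double_stalk :: "(complex^'n) set \<Rightarrow> (complex^'n \<Rightarrow> (complex^'n \<Rightarrow> complex^'p) set)
     \<Rightarrow> complex^'n \<Rightarrow> (complex^('n + 'n) \<Rightarrow> complex^('p + 'p)) set" where
  "double_stalk X M x = span_germs (XxX X) (dpt x x) {dbl h | h. h \<in> M x}"

definition lip_sat :: "(complex^'n) set \<Rightarrow> (complex^'n \<Rightarrow> (complex^'n \<Rightarrow> complex^'p) set)
     \<Rightarrow> complex^'n \<Rightarrow> (complex^'n \<Rightarrow> complex^'p) set" where
  "lip_sat X M x = {h. holo_germ x h \<and>
     dbl h \<in> int_closure (XxX X) (dpt x x) (double_stalk X M x)}"

text \<open>M x is the stalk at x (a set of representatives of germs).  M is a subsheaf of
  O_X-submodules of O_X^p: every stalk is a submodule, and every germ in a stalk comes from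
  a section on a neighbourhood, i.e. its germs at nearby points of X lie in M.\<close>
definition sheaf_submodule :: "(complex^'n) set \<Rightarrow> (complex^'n \<Rightarrow> (complex^'n \<Rightarrow> complex^'p) set) \<Rightarrow> bool" where
  "sheaf_submodule X M \<longleftrightarrow>
     (\<forall>x\<in>X. germ_submodule X x (M x)) \<and>
     (\<forall>x\<in>X. \<forall>h\<in>M x. \<exists>U. open U \<and> x \<in> U \<and> (\<forall>y\<in>X \<inter> U. h \<in> M y))"

end

theory Submission
  imports Defs
begin

text \<open>Everything is checked curve by curve.  Along an analytic curve \<open>\<phi>\<close> in \<open>X \<times> X\<close>
  through \<open>(x, x)\<close> the pull-back of the stalk of \<open>\<M>\<^sub>D\<close> is already generated by the
  pull-backs of the doubles \<open>h\<^sub>D\<close>, \<open>h \<in> \<M>\<^sub>x\<close>, because holomorphic coefficients compose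
  with \<open>\<phi>\<close> to holomorphic functions of one variable.  Along a diagonal curve
  \<open>t \<mapsto> (\<psi> t, \<psi> t)\<close> the first block of a relation for \<open>h\<^sub>D\<close> is a relation for \<open>h\<close>
  along \<open>\<psi>\<close>, so \<open>\<M>\<^sub>S\<^sub>1\<close> lies in the integral closure of \<open>\<M>\<close>.  Closedness under
  multiplication by a germ \<open>a\<close> holds since \<open>(a h)\<^sub>D\<close> arises from \<open>h\<^sub>D\<close> by scaling the two
  blocks by \<open>a \<circ> \<pi>\<^sub>1\<close> and \<open>a \<circ> \<pi>\<^sub>2\<close>, which turns each generator \<open>m\<^sub>D\<close> into \<open>(a m)\<^sub>D\<close>.\<close>

lemma vec_has_derivative:
  fixes f :: "'a::euclidean_space \<Rightarrow> complex^'k"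
  assumes "\<And>i. ((\<lambda>t. f t $ i) has_derivative f' i) (at x)"
  shows "(f has_derivative (\<lambda>h. \<chi> i. f' i h)) (at x)"
proof -
  have "\<And>i. bounded_linear (f' i)" using assms has_derivative_bounded_linear by blast
  then have "linear (\<lambda>h. \<chi> i. f' i h)"
    by (intro linearI) (simp_all add: vec_eq_iff linear_add linear_scale bounded_linear.linear)
  then have bounded: "bounded_linear (\<lambda>h. \<chi> i. f' i h)" by (simp add: linear_conv_bounded_linear)
  have "((\<lambda>y. (1 / norm (y - x)) *\<^sub>R (f y - (f x + (\<chi> i. f' i (y - x))))) \<longlongrightarrow> 0) (at x)"
  proof (rule vec_tendstoI)
    fix i
    have "((\<lambda>y. (1 / norm (y - x)) *\<^sub>R (f y $ i - (f x $ i + f' i (y - x)))) \<longlongrightarrow> 0) (at x)"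
      using assms[of i] unfolding has_derivative_within by blast
    then show "((\<lambda>y. ((1 / norm (y - x)) *\<^sub>R (f y - (f x + (\<chi> i. f' i (y - x))))) $ i) \<longlongrightarrow> 0 $ i) (at x)"
      by simp
  qed
  then show ?thesis using bounded unfolding has_derivative_within by blast
qed

lemma sum_lessThan_add_nat:
  fixes k k' :: nat
  shows "(\<Sum>i<k + k'. f i) = (\<Sum>i<k. f i) + (\<Sum>i<k'. f (k + i) :: 'a::comm_monoid_add)"
  by (induction k') (simp_all add: ac_simps)

section \<open>Holomorphic germs\<close>

lemma cholo_on_subset: "cholo_on U f \<Longrightarrow> open V \<Longrightarrow> V \<subseteq> U \<Longrightarrow> cholo_on V f"
  unfolding cholo_on_def by blast

lemma cholo_on_const: "open U \<Longrightarrow> cholo_on U (\<lambda>z. c)"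
  unfolding cholo_on_def by (auto intro!: exI[of _ "\<lambda>_. 0"])

lemma cholo_on_add:
  assumes "cholo_on U f" "cholo_on U g"
  shows "cholo_on U (\<lambda>z. f z + g z)"
  unfolding cholo_on_def
proof (intro conjI ballI)
  show "open U" using assms(1) unfolding cholo_on_def by blast
  fix w assume "w \<in> U"
  then obtain D E where "(f has_derivative D) (at w)" "\<forall>c v. D (c *s v) = c * D v"
    "(g has_derivative E) (at w)" "\<forall>c v. E (c *s v) = c * E v"
    using assms unfolding cholo_on_def by blast
  then show "\<exists>D. ((\<lambda>z. f z + g z) has_derivative D) (at w) \<and> (\<forall>c v. D (c *s v) = c * D v)"
    by (intro exI[of _ "\<lambda>v. D v + E v"]) (auto intro: has_derivative_add simp: distrib_left)
qed

lemma cholo_on_mult: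
  assumes "cholo_on U f" "cholo_on U g"
  shows "cholo_on U (\<lambda>z. f z * g z)"
  unfolding cholo_on_def
proof (intro conjI ballI)
  show "open U" using assms(1) unfolding cholo_on_def by blast
  fix w assume "w \<in> U"
  then obtain D E where D: "(f has_derivative D) (at w)" "\<forall>c v. D (c *s v) = c * D v"
    and E: "(g has_derivative E) (at w)" "\<forall>c v. E (c *s v) = c * E v"
    using assms unfolding cholo_on_def by blast
  have "((\<lambda>z. f z * g z) has_derivative (\<lambda>v. f w * E v + D v * g w)) (at w)"
    using D(1) E(1) by (rule has_derivative_mult)
  moreover have "\<forall>c v. f w * E (c *s v) + D (c *s v) * g w = c * (f w * E v + D v * g w)"
    using D(2) E(2) by (simp add: algebra_simps)
  ultimately show "\<exists>D. ((\<lambda>z. f z * g z) has_derivative D) (at w) \<and> (\<forall>c v. D (c *s v) = c * D v)"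
    by blast
qed

lemma cholo_on_comp_linear:
  fixes L :: "complex^'a \<Rightarrow> complex^'b"
  assumes L: "linear L" "\<And>c v. L (c *s v) = c *s L v" and f: "cholo_on U f"
  shows "cholo_on (L -` U) (\<lambda>z. f (L z))"
  unfolding cholo_on_def
proof (intro conjI ballI)
  have bl: "bounded_linear L" using L by (simp add: linear_conv_bounded_linear)
  show "open (L -` U)" using f unfolding cholo_on_def
    by (intro open_vimage) (auto intro: linear_continuous_on bl)
  fix w assume "w \<in> L -` U"
  then obtain D where D: "(f has_derivative D) (at (L w))" "\<forall>c v. D (c *s v) = c * D v"
    using f unfolding cholo_on_def by auto
  have "((\<lambda>z. f (L z)) has_derivative (\<lambda>v. D (L v))) (at w)"
    using has_derivative_compose[OF bounded_linear_imp_has_derivative[OF bl] D(1)] by (simp add: o_def)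
  then show "\<exists>D. ((\<lambda>z. f (L z)) has_derivative D) (at w) \<and> (\<forall>c v. D (c *s v) = c * D v)"
    using D(2) L(2) by auto
qed

lemma holo_germ_zero: "holo_germ x (\<lambda>z. 0)"
  unfolding holo_germ_def using cholo_on_const[of UNIV] by (auto intro!: exI[of _ UNIV])

lemma sholo_germ_const: "sholo_germ x (\<lambda>z. c)"
  unfolding sholo_germ_def using cholo_on_const[of UNIV] by (auto intro!: exI[of _ UNIV])

lemma holo_germ_add:
  assumes "holo_germ x g" "holo_germ x h"
  shows "holo_germ x (\<lambda>z. g z + h z)"
proof -
  obtain U where U: "open U" "x \<in> U" "\<And>j. cholo_on U (\<lambda>z. g z $ j)"
    using assms(1) unfolding holo_germ_def by blast
  obtain V where V: "open V" "x \<in> V" "\<And>j. cholo_on V (\<lambda>z. h z $ j)"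
    using assms(2) unfolding holo_germ_def by blast
  have "cholo_on (U \<inter> V) (\<lambda>z. (g z + h z) $ j)" for j
    using cholo_on_add[OF cholo_on_subset[OF U(3), of "U \<inter> V" j] cholo_on_subset[OF V(3), of "U \<inter> V" j]] U V
    by auto
  then show ?thesis unfolding holo_germ_def using U V by (intro exI[of _ "U \<inter> V"]) auto
qed

lemma holo_germ_smult:
  assumes "sholo_germ x a" "holo_germ x h"
  shows "holo_germ x (\<lambda>z. a z *s h z)"
proof -
  obtain U where U: "open U" "x \<in> U" "cholo_on U a"
    using assms(1) unfolding sholo_germ_def by blast
  obtain V where V: "open V" "x \<in> V" "\<And>j. cholo_on V (\<lambda>z. h z $ j)"
    using assms(2) unfolding holo_germ_def by blast
  have "cholo_on (U \<inter> V) (\<lambda>z. (a z *s h z) $ j)" for j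
    using cholo_on_mult[OF cholo_on_subset[OF U(3), of "U \<inter> V"] cholo_on_subset[OF V(3), of "U \<inter> V" j]] U V
    by auto
  then show ?thesis unfolding holo_germ_def using U V by (intro exI[of _ "U \<inter> V"]) auto
qed

section \<open>Analytic curve germs\<close>

lemma curve_germ_shrink:
  assumes "curve_germ Y y \<phi>" "open V" "y \<in> V"
  obtains \<delta> where "\<delta> > 0" "\<forall>t\<in>ball 0 \<delta>. \<phi> t \<in> Y \<and> \<phi> t \<in> V"
    "\<forall>i. (\<lambda>t. \<phi> t $ i) holomorphic_on ball 0 \<delta>"
proof -
  obtain \<epsilon> where e: "\<epsilon> > 0" "\<forall>t\<in>ball 0 \<epsilon>. \<phi> t \<in> Y" "\<forall>i. (\<lambda>t. \<phi> t $ i) holomorphic_on ball 0 \<epsilon>"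
    and "\<phi> 0 = y" using assms(1) unfolding curve_germ_def by blast
  have "continuous_on (ball 0 \<epsilon>) (\<lambda>t. \<chi> i. \<phi> t $ i)"
    using e(3) by (intro continuous_on_vec_lambda holomorphic_on_imp_continuous_on) auto
  then have "isCont \<phi> 0" using e(1) by (simp add: continuous_on_eq_continuous_at)
  then have "\<forall>\<^sub>F t in at 0. \<phi> t \<in> V"
    using assms(2,3) \<open>\<phi> 0 = y\<close> unfolding isCont_def by (metis topological_tendstoD)
  then obtain d where d: "d > 0" "\<forall>t. t \<noteq> 0 \<and> dist t 0 < d \<longrightarrow> \<phi> t \<in> V"
    unfolding eventually_at by blast
  have "\<phi> t \<in> V" if "t \<in> ball 0 (min d \<epsilon>)" for t
    using that d \<open>\<phi> 0 = y\<close> assms(3) by (cases "t = 0") (auto simp: dist_commute)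
  moreover have "(\<lambda>t. \<phi> t $ i) holomorphic_on ball 0 (min d \<epsilon>)" for i
    using e(3) holomorphic_on_subset subset_ball[of "min d \<epsilon>" \<epsilon>] by (metis min.cobounded2)
  ultimately show ?thesis using d(1) e by (intro that[of "min d \<epsilon>"]) auto
qed

lemma holomorphic_on_comp_curve:
  assumes "sholo_germ y b" "curve_germ Y y \<phi>"
  obtains \<delta> where "\<delta> > 0" "(\<lambda>t. b (\<phi> t)) holomorphic_on ball 0 \<delta>"
proof -
  obtain U where U: "open U" "y \<in> U" "cholo_on U b" using assms(1) unfolding sholo_germ_def by blast
  obtain \<delta> where d: "\<delta> > 0" "\<forall>t\<in>ball 0 \<delta>. \<phi> t \<in> Y \<and> \<phi> t \<in> U"
    "\<forall>i. (\<lambda>t. \<phi> t $ i) holomorphic_on ball 0 \<delta>"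
    by (rule curve_germ_shrink[OF assms(2) U(1,2)])
  have "(\<lambda>t. b (\<phi> t)) holomorphic_on ball 0 \<delta>"
    unfolding holomorphic_on_open[OF open_ball]
  proof
    fix t :: complex assume t: "t \<in> ball 0 \<delta>"
    have "\<forall>i. \<exists>f'. ((\<lambda>t. \<phi> t $ i) has_field_derivative f') (at t)"
      using d(3) t unfolding holomorphic_on_open[OF open_ball] by blast
    then obtain v where v: "\<And>i. ((\<lambda>t. \<phi> t $ i) has_field_derivative v i) (at t)"
      by metis
    have "(\<phi> has_derivative (\<lambda>h. \<chi> i. v i * h)) (at t)"
      by (rule vec_has_derivative) (use v in \<open>simp add: has_field_derivative_def\<close>)
    moreover obtain D where D: "(b has_derivative D) (at (\<phi> t))" "\<forall>c w. D (c *s w) = c * D w"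
      using U(3) d(2) t unfolding cholo_on_def by meson
    ultimately have "((\<lambda>t. b (\<phi> t)) has_derivative (\<lambda>h. D (\<chi> i. v i * h))) (at t)"
      using has_derivative_compose[of \<phi> _ t UNIV b D] by (simp add: o_def)
    moreover have "(\<lambda>h. D (\<chi> i. v i * h)) = (*) (D (\<chi> i. v i))"
    proof
      fix h have "(\<chi> i. v i * h) = h *s (\<chi> i. v i)" by (simp add: vec_eq_iff mult.commute)
      then show "D (\<chi> i. v i * h) = D (\<chi> i. v i) * h" using D(2) by (simp add: mult.commute)
    qed
    ultimately show "\<exists>f'. ((\<lambda>t. b (\<phi> t)) has_field_derivative f') (at t)"
      unfolding has_field_derivative_def by metis
  qed
  with d(1) show ?thesis by (rule that)
qed

section \<open>Pull-back modules\<close>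

lemma pullback_module_cong:
  assumes "u \<in> pullback_module \<phi> N" "\<epsilon> > 0" "\<forall>t\<in>ball 0 \<epsilon>. v t = u t"
  shows "v \<in> pullback_module \<phi> N"
proof -
  obtain e and k :: nat and g a where u: "e > 0" "\<forall>i<k. g i \<in> N \<and> a i holomorphic_on ball 0 e"
    "\<forall>t\<in>ball 0 e. u t = (\<Sum>i<k. a i t *s g i (\<phi> t))"
    using assms(1) unfolding pullback_module_def by blast
  have "\<forall>i<k. g i \<in> N \<and> a i holomorphic_on ball 0 (min e \<epsilon>)"
    using u(2) holomorphic_on_subset subset_ball[of "min e \<epsilon>" e] by (metis min.cobounded1)
  moreover have "\<forall>t\<in>ball 0 (min e \<epsilon>). v t = (\<Sum>i<k. a i t *s g i (\<phi> t))"
    using u(3) assms(3) by auto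
  ultimately show ?thesis unfolding pullback_module_def using u(1) assms(2)
    by (intro CollectI exI[of _ "min e \<epsilon>"] conjI) (simp, blast)
qed

lemma pullback_module_zero: "(\<lambda>t. 0) \<in> pullback_module \<phi> N"
  unfolding pullback_module_def by (intro CollectI exI[of _ 1] conjI exI[of _ 0]) auto

lemma pullback_module_generator: "g \<in> N \<Longrightarrow> g \<circ> \<phi> \<in> pullback_module \<phi> N"
  unfolding pullback_module_def
  by (intro CollectI exI[of _ 1] conjI exI[of _ "Suc 0"] exI[of _ "\<lambda>_. g"] exI[of _ "\<lambda>_ _. 1"]) auto

lemma pullback_module_smult:
  assumes "u \<in> pullback_module \<phi> N" "\<epsilon> > 0" "c holomorphic_on ball 0 \<epsilon>"
  shows "(\<lambda>t. c t *s u t) \<in> pullback_module \<phi> N"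
proof -
  obtain e and k :: nat and g a where u: "e > 0" "\<forall>i<k. g i \<in> N \<and> a i holomorphic_on ball 0 e"
    "\<forall>t\<in>ball 0 e. u t = (\<Sum>i<k. a i t *s g i (\<phi> t))"
    using assms(1) unfolding pullback_module_def by blast
  define m where "m = min e \<epsilon>"
  have m: "m > 0" "ball 0 m \<subseteq> ball 0 e" "ball 0 m \<subseteq> ball 0 \<epsilon>"
    using u(1) assms(2) by (auto simp: m_def)
  have "\<forall>i<k. g i \<in> N \<and> (\<lambda>t. c t * a i t) holomorphic_on ball 0 m"
    using u(2) assms(3) m by (auto intro!: holomorphic_on_mult intro: holomorphic_on_subset)
  moreover have "\<forall>t\<in>ball 0 m. c t *s u t = (\<Sum>i<k. (c t * a i t) *s g i (\<phi> t))"
    using u(3) m by (auto simp: vec_eq_iff sum_distrib_left mult.assoc)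
  ultimately show ?thesis unfolding pullback_module_def using m(1)
    by (intro CollectI exI[of _ m] conjI exI[of _ k] exI[of _ g] exI[of _ "\<lambda>i t. c t * a i t"]) auto
qed

lemma pullback_module_add:
  assumes "u \<in> pullback_module \<phi> N" "v \<in> pullback_module \<phi> N"
  shows "(\<lambda>t. u t + v t) \<in> pullback_module \<phi> N"
proof -
  obtain e and k :: nat and g a where u: "e > 0" "\<forall>i<k. g i \<in> N \<and> a i holomorphic_on ball 0 e"
    "\<forall>t\<in>ball 0 e. u t = (\<Sum>i<k. a i t *s g i (\<phi> t))"
    using assms(1) unfolding pullback_module_def by blast
  obtain e' and k' :: nat and g' a' where v: "e' > 0" "\<forall>i<k'. g' i \<in> N \<and> a' i holomorphic_on ball 0 e'"
    "\<forall>t\<in>ball 0 e'. v t = (\<Sum>i<k'. a' i t *s g' i (\<phi> t))"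
    using assms(2) unfolding pullback_module_def by blast
  define m where "m = min e e'"
  have m: "m > 0" "ball 0 m \<subseteq> ball 0 e" "ball 0 m \<subseteq> ball 0 e'"
    using u(1) v(1) by (auto simp: m_def)
  define G where "G i = (if i < k then g i else g' (i - k))" for i
  define A where "A i = (if i < k then a i else a' (i - k))" for i
  have "G i \<in> N \<and> A i holomorphic_on ball 0 m" if "i < k + k'" for i
  proof (cases "i < k")
    case True then show ?thesis using u(2) m unfolding G_def A_def by (auto intro: holomorphic_on_subset)
  next
    case False
    with that have "i - k < k'" by simp
    then show ?thesis using False v(2) m unfolding G_def A_def by (auto intro: holomorphic_on_subset)
  qed
  moreover have "u t + v t = (\<Sum>i<k + k'. A i t *s G i (\<phi> t))" if "t \<in> ball 0 m" for t
  proof -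
    have "t \<in> ball 0 e" "t \<in> ball 0 e'" using that m(2,3) by blast+
    then show ?thesis using u(3) v(3) by (simp add: sum_lessThan_add_nat A_def G_def)
  qed
  ultimately show ?thesis unfolding pullback_module_def using m(1)
    by (intro CollectI exI[of _ m] conjI exI[of _ "k + k'"] exI[of _ G] exI[of _ A]) auto
qed

lemma pullback_module_sum:
  "(\<And>i. i < (k :: nat) \<Longrightarrow> f i \<in> pullback_module \<phi> N) \<Longrightarrow> (\<lambda>t. \<Sum>i<k. f i t) \<in> pullback_module \<phi> N"
proof (induction k)
  case 0 then show ?case using pullback_module_zero by simp
next
  case (Suc k)
  then have "(\<lambda>t. (\<Sum>i<k. f i t) + f k t) \<in> pullback_module \<phi> N"
    by (intro pullback_module_add) auto
  then show ?case by simp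
qed

lemma pullback_module_lincomb:
  assumes "\<epsilon> > 0" "\<forall>i<(k :: nat). a i holomorphic_on ball 0 \<epsilon> \<and> g i \<circ> \<phi> \<in> pullback_module \<phi> N"
    "\<forall>t\<in>ball 0 \<epsilon>. u t = (\<Sum>i<k. a i t *s g i (\<phi> t))"
  shows "u \<in> pullback_module \<phi> N"
proof -
  have "(\<lambda>t. a i t *s (g i \<circ> \<phi>) t) \<in> pullback_module \<phi> N" if "i < k" for i
    using assms(2) that pullback_module_smult[OF _ assms(1)] by blast
  then have "(\<lambda>t. \<Sum>i<k. a i t *s g i (\<phi> t)) \<in> pullback_module \<phi> N"
    by (intro pullback_module_sum[where f = "\<lambda>i t. a i t *s g i (\<phi> t)"]) simp
  then show ?thesis using assms(1,3) by (rule pullback_module_cong)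
qed

lemma pullback_module_subset:
  assumes "\<And>g. g \<in> N \<Longrightarrow> g \<circ> \<phi> \<in> pullback_module \<phi> N'"
  shows "pullback_module \<phi> N \<subseteq> pullback_module \<phi> N'"
proof
  fix u assume "u \<in> pullback_module \<phi> N"
  then obtain e and k :: nat and g a where "e > 0" "\<forall>i<k. g i \<in> N \<and> a i holomorphic_on ball 0 e"
    "\<forall>t\<in>ball 0 e. u t = (\<Sum>i<k. a i t *s g i (\<phi> t))"
    unfolding pullback_module_def by blast
  then show "u \<in> pullback_module \<phi> N'" using assms by (intro pullback_module_lincomb) auto
qed

lemma pullback_module_image_obtain:
  assumes "u \<in> pullback_module \<phi> (f ` N)"
  obtains e and k :: nat and m a where "e > 0" "\<forall>i<k. m i \<in> N \<and> a i holomorphic_on ball 0 e"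
    "\<forall>t\<in>ball 0 e. u t = (\<Sum>i<k. a i t *s f (m i) (\<phi> t))"
proof -
  obtain e and k :: nat and g a where u: "e > 0" "\<forall>i<k. g i \<in> f ` N \<and> a i holomorphic_on ball 0 e"
    "\<forall>t\<in>ball 0 e. u t = (\<Sum>i<k. a i t *s g i (\<phi> t))"
    using assms unfolding pullback_module_def by blast
  have "\<forall>i. \<exists>m. i < k \<longrightarrow> g i = f m \<and> m \<in> N" using u(2) by blast
  then obtain m where "\<And>i. i < k \<Longrightarrow> g i = f (m i) \<and> m i \<in> N" by metis
  then show ?thesis using u by (intro that[of e k m a]) auto
qed

lemma pullback_module_same_germ:
  assumes "h \<circ> \<phi> \<in> pullback_module \<phi> N" "curve_germ Y y \<phi>" "same_germ Y y g h"
  shows "g \<circ> \<phi> \<in> pullback_module \<phi> N"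
proof -
  obtain V where V: "open V" "y \<in> V" "\<forall>z\<in>Y \<inter> V. g z = h z"
    using assms(3) unfolding same_germ_def by blast
  obtain \<delta> where "\<delta> > 0" "\<forall>t\<in>ball 0 \<delta>. \<phi> t \<in> Y \<and> \<phi> t \<in> V"
    using curve_germ_shrink[OF assms(2) V(1,2)] by metis
  then show ?thesis using V(3) by (intro pullback_module_cong[OF assms(1)]) auto
qed

lemma pullback_span_germs_mem:
  assumes "G \<in> span_germs Y y S" "curve_germ Y y \<phi>"
  shows "G \<circ> \<phi> \<in> pullback_module \<phi> S"
proof -
  obtain V and k :: nat and g a where V: "open V" "y \<in> V" "\<forall>i<k. g i \<in> S \<and> sholo_germ y (a i)"
    "\<forall>z\<in>Y \<inter> V. G z = (\<Sum>i<k. a i z *s g i z)"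
    using assms(1) unfolding span_germs_def by blast
  obtain d where d: "d > 0" "\<forall>t\<in>ball 0 d. \<phi> t \<in> Y \<and> \<phi> t \<in> V"
    using curve_germ_shrink[OF assms(2) V(1,2)] by metis
  have "\<exists>e>0. (\<lambda>t. a i (\<phi> t)) holomorphic_on ball 0 e" if "i < k" for i
    by (rule holomorphic_on_comp_curve[OF _ assms(2)]) (use V(3) that in auto)
  then obtain e where e: "\<And>i. i < k \<Longrightarrow> e i > 0 \<and> (\<lambda>t. a i (\<phi> t)) holomorphic_on ball 0 (e i)"
    by metis
  define \<epsilon> where "\<epsilon> = Min (insert d (e ` {..<k}))"
  have "\<epsilon> > 0" unfolding \<epsilon>_def using d(1) e by (subst Min_gr_iff) auto
  have "\<epsilon> \<le> d" "\<And>i. i < k \<Longrightarrow> \<epsilon> \<le> e i" unfolding \<epsilon>_def by auto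
  show ?thesis
  proof (rule pullback_module_lincomb[of \<epsilon> k "\<lambda>i t. a i (\<phi> t)" g])
    show "\<forall>i<k. (\<lambda>t. a i (\<phi> t)) holomorphic_on ball 0 \<epsilon> \<and> g i \<circ> \<phi> \<in> pullback_module \<phi> S"
      using e \<open>\<And>i. i < k \<Longrightarrow> \<epsilon> \<le> e i\<close> V(3) pullback_module_generator
      by (meson holomorphic_on_subset subset_ball)
    show "\<forall>t\<in>ball 0 \<epsilon>. (G \<circ> \<phi>) t = (\<Sum>i<k. a i (\<phi> t) *s g i (\<phi> t))"
      using d(2) V(4) \<open>\<epsilon> \<le> d\<close> by auto
  qed fact
qed

lemma pullback_module_span_germs:
  assumes "curve_germ Y y \<phi>" "\<forall>g\<in>S. holo_germ y g"
  shows "pullback_module \<phi> (span_germs Y y S) = pullback_module \<phi> S"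
proof
  show "pullback_module \<phi> (span_germs Y y S) \<subseteq> pullback_module \<phi> S"
    using pullback_span_germs_mem[OF _ assms(1)] by (rule pullback_module_subset)
  have "g \<in> span_germs Y y S" if "g \<in> S" for g
    unfolding span_germs_def using assms(2) that sholo_germ_const[of y 1]
    by (intro CollectI conjI exI[of _ UNIV] exI[of _ "Suc 0"] exI[of _ "\<lambda>_. g"] exI[of _ "\<lambda>_ _. 1"]) auto
  then show "pullback_module \<phi> S \<subseteq> pullback_module \<phi> (span_germs Y y S)"
    using pullback_module_generator by (intro pullback_module_subset) blast
qed

section \<open>Doubles\<close>

lemma pr1_dpt [simp]: "pr1 (dpt x y) = x" and pr2_dpt [simp]: "pr2 (dpt x y) = y"
  by (simp_all add: pr1_def pr2_def dpt_def vec_eq_iff)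

lemma dbl_Inl [simp]: "dbl h w $ Inl j = h (pr1 w) $ j"
  and dbl_Inr [simp]: "dbl h w $ Inr j = h (pr2 w) $ j"
  by (simp_all add: dbl_def)

lemma dbl_zero: "dbl (\<lambda>z. 0) = (\<lambda>w. 0)"
  by (simp add: fun_eq_iff vec_eq_iff dbl_def split: sum.split)

lemma dbl_add: "dbl (\<lambda>z. g z + h z) = (\<lambda>w. dbl g w + dbl h w)"
  by (simp add: fun_eq_iff vec_eq_iff dbl_def split: sum.split)

lemma linear_pr1: "linear pr1" and linear_pr2: "linear pr2"
  by (auto intro!: linearI simp: pr1_def pr2_def vec_eq_iff)

lemma pr1_smult: "pr1 (c *s v) = c *s pr1 v" and pr2_smult: "pr2 (c *s v) = c *s pr2 v"
  by (simp_all add: pr1_def pr2_def vec_eq_iff)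

lemma open_pr_vimage: "open V \<Longrightarrow> open (pr1 -` V \<inter> pr2 -` V)"
  using linear_pr1 linear_pr2
  by (intro open_Int open_vimage) (auto intro: linear_continuous_on simp: linear_conv_bounded_linear)

lemma holo_germ_dbl:
  assumes "holo_germ x h"
  shows "holo_germ (dpt x x) (dbl h)"
proof -
  obtain U where U: "open U" "x \<in> U" "\<And>j. cholo_on U (\<lambda>z. h z $ j)"
    using assms unfolding holo_germ_def by blast
  define U' where "U' = pr1 -` U \<inter> pr2 -` U"
  have "open U'" using open_pr_vimage[OF U(1)] by (simp add: U'_def)
  have "cholo_on U' (\<lambda>w. dbl h w $ k)" for k
  proof (cases k)
    case (Inl j) then show ?thesis
      using cholo_on_subset[OF cholo_on_comp_linear[OF linear_pr1 pr1_smult U(3)] \<open>open U'\<close>]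
      by (auto simp: U'_def)
  next
    case (Inr j) then show ?thesis
      using cholo_on_subset[OF cholo_on_comp_linear[OF linear_pr2 pr2_smult U(3)] \<open>open U'\<close>]
      by (auto simp: U'_def)
  qed
  moreover have "dpt x x \<in> U'" using U(2) by (simp add: U'_def)
  ultimately show ?thesis unfolding holo_germ_def using \<open>open U'\<close> by blast
qed

lemma same_germ_dbl:
  assumes "same_germ X x g h"
  shows "same_germ (XxX X) (dpt x x) (dbl g) (dbl h)"
proof -
  obtain V where V: "open V" "x \<in> V" "\<forall>z\<in>X \<inter> V. g z = h z"
    using assms unfolding same_germ_def by blast
  then show ?thesis unfolding same_germ_def XxX_def dbl_def
    by (intro exI[of _ "pr1 -` V \<inter> pr2 -` V"]) (auto simp: open_pr_vimage)
qed

lemma curve_germ_diagonal: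
  assumes "curve_germ X x \<psi>"
  shows "curve_germ (XxX X) (dpt x x) (\<lambda>t. dpt (\<psi> t) (\<psi> t))"
proof -
  obtain \<epsilon> where e: "\<epsilon> > 0" "\<forall>t\<in>ball 0 \<epsilon>. \<psi> t \<in> X" "\<forall>i. (\<lambda>t. \<psi> t $ i) holomorphic_on ball 0 \<epsilon>"
    and "\<psi> 0 = x" using assms unfolding curve_germ_def by blast
  have "(\<lambda>t. dpt (\<psi> t) (\<psi> t) $ k) holomorphic_on ball 0 \<epsilon>" for k
    using e(3) by (cases k) (simp_all add: dpt_def)
  then show ?thesis unfolding curve_germ_def XxX_def using e \<open>\<psi> 0 = x\<close> by auto
qed

lemma pullback_dbl_diagonal:
  assumes "dbl h \<circ> (\<lambda>t. dpt (\<psi> t) (\<psi> t)) \<in> pullback_module (\<lambda>t. dpt (\<psi> t) (\<psi> t)) (dbl ` N)"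
  shows "h \<circ> \<psi> \<in> pullback_module \<psi> N"
proof -
  obtain e and k :: nat and m a where r: "e > 0" "\<forall>i<k. m i \<in> N \<and> a i holomorphic_on ball 0 e"
    "\<forall>t\<in>ball 0 e. (dbl h \<circ> (\<lambda>t. dpt (\<psi> t) (\<psi> t))) t = (\<Sum>i<k. a i t *s dbl (m i) (dpt (\<psi> t) (\<psi> t)))"
    by (rule pullback_module_image_obtain[OF assms])
  have "\<forall>t\<in>ball 0 e. h (\<psi> t) = (\<Sum>i<k. a i t *s m i (\<psi> t))"
  proof
    fix t :: complex assume "t \<in> ball 0 e"
    then have "\<forall>j. dbl h (dpt (\<psi> t) (\<psi> t)) $ Inl j = (\<Sum>i<k. a i t *s dbl (m i) (dpt (\<psi> t) (\<psi> t))) $ Inl j"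
      using r(3) by simp
    then show "h (\<psi> t) = (\<Sum>i<k. a i t *s m i (\<psi> t))" by (simp add: vec_eq_iff)
  qed
  then show ?thesis unfolding pullback_module_def using r(1,2)
    by (intro CollectI exI[of _ e] conjI exI[of _ k] exI[of _ m] exI[of _ a]) auto
qed

lemma pullback_dbl_smult:
  assumes "dbl h \<circ> \<phi> \<in> pullback_module \<phi> (dbl ` N)" and "\<And>m. m \<in> N \<Longrightarrow> (\<lambda>z. a z *s m z) \<in> N"
  shows "dbl (\<lambda>z. a z *s h z) \<circ> \<phi> \<in> pullback_module \<phi> (dbl ` N)"
proof -
  obtain e and k :: nat and m b where r: "e > 0" "\<forall>i<k. m i \<in> N \<and> b i holomorphic_on ball 0 e"
    "\<forall>t\<in>ball 0 e. (dbl h \<circ> \<phi>) t = (\<Sum>i<k. b i t *s dbl (m i) (\<phi> t))"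
    by (rule pullback_module_image_obtain[OF assms(1)])
  have "dbl (\<lambda>z. a z *s h z) (\<phi> t) = (\<Sum>i<k. b i t *s dbl (\<lambda>z. a z *s m i z) (\<phi> t))"
    if "t \<in> ball 0 e" for t
  proof -
    have E: "dbl h (\<phi> t) $ q = (\<Sum>i<k. b i t *s dbl (m i) (\<phi> t)) $ q" for q
      using r(3) that by simp
    show ?thesis
    proof (subst vec_eq_iff, rule allI)
      fix q show "dbl (\<lambda>z. a z *s h z) (\<phi> t) $ q = (\<Sum>i<k. b i t *s dbl (\<lambda>z. a z *s m i z) (\<phi> t)) $ q"
        using E[of q] by (cases q) (simp_all add: sum_distrib_left ac_simps)
    qed
  qed
  moreover have "\<forall>i<k. (\<lambda>z. a z *s m i z) \<in> N \<and> b i holomorphic_on ball 0 e"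
    using r(2) assms(2) by blast
  ultimately show ?thesis unfolding pullback_module_def using r(1)
    by (intro CollectI exI[of _ e] conjI exI[of _ k]
        exI[of _ "\<lambda>i. dbl (\<lambda>z. a z *s m i z)"] exI[of _ b]) auto
qed

section \<open>The 1-Lipschitz saturation\<close>

lemma lip_sat_iff:
  assumes "\<forall>h\<in>M x. holo_germ x h"
  shows "h \<in> lip_sat X M x \<longleftrightarrow> holo_germ x h \<and>
    (\<forall>\<phi>. curve_germ (XxX X) (dpt x x) \<phi> \<longrightarrow> dbl h \<circ> \<phi> \<in> pullback_module \<phi> (dbl ` M x))"
proof -
  have stalk: "double_stalk X M x = span_germs (XxX X) (dpt x x) (dbl ` M x)"
    unfolding double_stalk_def by (simp add: setcompr_eq_image)
  have "\<forall>g\<in>dbl ` M x. holo_germ (dpt x x) g" using assms holo_germ_dbl by blast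
  then have "pullback_module \<phi> (double_stalk X M x) = pullback_module \<phi> (dbl ` M x)"
    if "curve_germ (XxX X) (dpt x x) \<phi>" for \<phi>
    unfolding stalk by (rule pullback_module_span_germs[OF that])
  then show ?thesis
    unfolding lip_sat_def int_closure_def using holo_germ_dbl by auto
qed

lemma stalk_subset_lip_sat:
  assumes "\<forall>h\<in>M x. holo_germ x h"
  shows "M x \<subseteq> lip_sat X M x"
  using assms by (auto simp: lip_sat_iff[of M x, OF assms] intro!: pullback_module_generator)

lemma lip_sat_subset_int_closure:
  assumes "\<forall>h\<in>M x. holo_germ x h"
  shows "lip_sat X M x \<subseteq> int_closure X x (M x)"
proof
  fix h assume "h \<in> lip_sat X M x"
  then have "holo_germ x h"
    and "\<forall>\<phi>. curve_germ (XxX X) (dpt x x) \<phi> \<longrightarrow> dbl h \<circ> \<phi> \<in> pullback_module \<phi> (dbl ` M x)"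
    by (simp_all add: lip_sat_iff[of M x, OF assms])
  then show "h \<in> int_closure X x (M x)"
    unfolding int_closure_def using curve_germ_diagonal pullback_dbl_diagonal by blast
qed

lemma germ_submodule_lip_sat:
  assumes M: "germ_submodule X x (M x)"
  shows "germ_submodule X x (lip_sat X M x)"
proof -
  have holo: "\<forall>h\<in>M x. holo_germ x h" using M unfolding germ_submodule_def by blast
  note mem = lip_sat_iff[of M x, OF holo]
  show ?thesis
    unfolding germ_submodule_def
  proof (intro conjI ballI allI impI)
    show "holo_germ x h" if "h \<in> lip_sat X M x" for h using that by (simp add: mem)
    show "(\<lambda>z. 0) \<in> lip_sat X M x"
      by (simp add: mem holo_germ_zero dbl_zero o_def pullback_module_zero)
    show "(\<lambda>z. g z + h z) \<in> lip_sat X M x" if "g \<in> lip_sat X M x" "h \<in> lip_sat X M x" for g h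
      using that by (auto simp: mem holo_germ_add dbl_add o_def
          intro: pullback_module_add[unfolded o_def])
    show "(\<lambda>z. a z *s h z) \<in> lip_sat X M x" if "sholo_germ x a" "h \<in> lip_sat X M x" for a h
      using that M unfolding germ_submodule_def
      by (auto simp: mem holo_germ_smult intro!: pullback_dbl_smult)
    show "g \<in> lip_sat X M x" if "h \<in> lip_sat X M x" "holo_germ x g" "same_germ X x g h" for g h
      using that by (auto simp: mem intro: pullback_module_same_germ same_germ_dbl)
  qed
qed

theorem mainTheorem1:
  fixes X :: "(complex^'n) set"
    and M :: "complex^'n \<Rightarrow> (complex^'n \<Rightarrow> complex^'p) set"
  assumes "analytic_set X"
    and "sheaf_submodule X M"
  shows "\<forall>x\<in>X. germ_submodule X x (lip_sat X M x)
              \<and> M x \<subseteq> lip_sat X M x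
              \<and> lip_sat X M x \<subseteq> int_closure X x (M x)"
proof
  fix x assume "x \<in> X"
  then have M: "germ_submodule X x (M x)" using assms(2) unfolding sheaf_submodule_def by blast
  then have "\<forall>h\<in>M x. holo_germ x h" unfolding germ_submodule_def by blast
  with M show "germ_submodule X x (lip_sat X M x) \<and> M x \<subseteq> lip_sat X M x
      \<and> lip_sat X M x \<subseteq> int_closure X x (M x)"
    by (simp add: germ_submodule_lip_sat stalk_subset_lip_sat lip_sat_subset_int_closure)
qed

end
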